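(* Let $k\geq 2$ and $\ell\geq 3k+2$ be fixed integers. Let $G\in\mathcal{G}_{k,n,p}$ and $v,w,w'\in V(G)$. Then \[ \left|H_{\mu_{\ell,w} v}-H_{\mu_{\ell,w'} v}\right|\lesssim\frac{\sqrt{\log n}}{\sqrt{pn}}. \]
   Context: Let $p=p(n)$ satisfy $\frac{\log n}{n^{(k-1)/k}}\le p\le 1-\Omega(\frac{\log^4 n}{n})$. $\mathcal{G}_{k,n,p}$ denotes the set of graphs $G$ on $n$ vertices satisfying: (i) $G$ is not bipartite; (ii) $\operatorname{diam}(G)\le k$; (iii) every vertex has degree $d(v)=pn\pm\mathcal{O}(\sqrt{pn\log n})$; (iv) $2|E(G)|=pn^2\pm\mathcal{O}(\sqrt{pn^2\log n})$; (v) $|N(v)\cap N(w)|=p^2n\pm\mathcal{O}(\max\{\sqrt{p^2n\log n},\log n\})$ for all $v\ne w$; (vi) the unit eigenvector $\phi$ of the largest adjacency eigenvalue has entries $\phi_i=\frac1{\sqrt n}\pm\mathcal{O}(\frac{\log^{3/2}n}{\sqrt p\,n\log(pn)})$; (vii) $\lambda_1=(1+o(1))pn$; (viii) $\max\{|\lambda_2|,|\lambda_n|\}=\mathcal{O}(\sqrt{pn})$, where $\lambda_1\ge\dots\ge\lambda_n$ are the adjacency eigenvalues. Asymptotic notation is as $n\to\infty$ with constants independent of $n$; $f\lesssim g$ means $f=\mathcal{O}(g)$. For a simple random walk $X$ on $G$ with $X_0=w$, $\mu_{\ell,w}(x)=\mathbb{P}[X_\ell=x\mid X_0=w]$. $H_{uv}$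 is the expected first hitting time of $v$ from $u$ (with $H_{vv}=0$), and for a probability distribution $\delta$ on $V(G)$, $H_{\delta v}=\sum_u\delta(u)H_{uv}$. *)

theory Defs
  imports Complex_Main
begin

definition simple_graph :: "nat \<Rightarrow> (nat \<Rightarrow> nat \<Rightarrow> bool) \<Rightarrow> bool" where
  "simple_graph n E \<longleftrightarrow> (\<forall>x y. E x y \<longrightarrow> x < n \<and> y < n \<and> x \<noteq> y \<and> E y x)"

definition adj :: "(nat \<Rightarrow> nat \<Rightarrow> bool) \<Rightarrow> nat \<Rightarrow> nat \<Rightarrow> real" where
  "adj E x y = (if E x y then 1 else 0)"

definition deg :: "nat \<Rightarrow> (nat \<Rightarrow> nat \<Rightarrow> bool) \<Rightarrow> nat \<Rightarrow> nat" where
  "deg n E v = card {u. u < n \<and> E v u}"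

definition num_edges :: "nat \<Rightarrow> (nat \<Rightarrow> nat \<Rightarrow> bool) \<Rightarrow> nat" where
  "num_edges n E = card {(x, y). x < n \<and> y < n \<and> x < y \<and> E x y}"

definition codeg :: "nat \<Rightarrow> (nat \<Rightarrow> nat \<Rightarrow> bool) \<Rightarrow> nat \<Rightarrow> nat \<Rightarrow> nat" where
  "codeg n E v w = card {u. u < n \<and> E v u \<and> E w u}"

definition bipartite :: "nat \<Rightarrow> (nat \<Rightarrow> nat \<Rightarrow> bool) \<Rightarrow> bool" where
  "bipartite n E \<longleftrightarrow> (\<exists>S. S \<subseteq> {..<n} \<and> (\<forall>x y. E x y \<longrightarrow> (x \<in> S \<longleftrightarrow> y \<notin> S)))"

fun dist_le :: "nat \<Rightarrow> (nat \<Rightarrow> nat \<Rightarrow> bool) \<Rightarrow> nat \<Rightarrow> nat \<Rightarrow> nat \<Rightarrow> bool" where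
  "dist_le n E 0 x y = (x = y)"
| "dist_le n E (Suc j) x y = (dist_le n E j x y \<or> (\<exists>z<n. dist_le n E j x z \<and> E z y))"

definition diam_le :: "nat \<Rightarrow> (nat \<Rightarrow> nat \<Rightarrow> bool) \<Rightarrow> nat \<Rightarrow> bool" where
  "diam_le n E k \<longleftrightarrow> (\<forall>x<n. \<forall>y<n. dist_le n E k x y)"

text \<open>Spectral decomposition of the adjacency matrix: an orthonormal basis
  phi 0, ..., phi (n-1) of eigenvectors (phi j i = i-th entry of the j-th vector)
  with eigenvalues lam 0 \<ge> lam 1 \<ge> ... \<ge> lam (n-1). By the spectral theorem
  lam lists all adjacency eigenvalues with multiplicity in non-increasing order
  (lam 0 = \<lambda>_1, lam 1 = \<lambda>_2, lam (n-1) = \<lambda>_n), and phi 0 is a unit eigenvector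
  of the largest eigenvalue.\<close>
definition spectral_decomp ::
  "nat \<Rightarrow> (nat \<Rightarrow> nat \<Rightarrow> bool) \<Rightarrow> (nat \<Rightarrow> real) \<Rightarrow> (nat \<Rightarrow> nat \<Rightarrow> real) \<Rightarrow> bool" where
  "spectral_decomp n E lam phi \<longleftrightarrow>
     (\<forall>j<n. \<forall>j'<n. (\<Sum>i<n. phi j i * phi j' i) = (if j = j' then 1 else 0)) \<and>
     (\<forall>j<n. \<forall>i<n. (\<Sum>m<n. adj E i m * phi j m) = lam j * phi j i) \<and>
     (\<forall>j j'. j \<le> j' \<and> j' < n \<longrightarrow> lam j' \<le> lam j)"

text \<open>The class G_{k,n,p}; every O(.)-constant is C0, and the o(1) in (vii) is eta.\<close>
definition in_class ::
  "nat \<Rightarrow> nat \<Rightarrow> real \<Rightarrow> real \<Rightarrow> real \<Rightarrow> (nat \<Rightarrow> nat \<Rightarrow> bool) \<Rightarrow> bool" where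
  "in_class k n p C0 eta E \<longleftrightarrow>
     simple_graph n E \<and>
     \<not> bipartite n E \<and>
     diam_le n E k \<and>
     (\<forall>v<n. \<bar>real (deg n E v) - p * n\<bar> \<le> C0 * sqrt (p * n * ln n)) \<and>
     \<bar>2 * real (num_edges n E) - p * n^2\<bar> \<le> C0 * sqrt (p * n^2 * ln n) \<and>
     (\<forall>v<n. \<forall>w<n. v \<noteq> w \<longrightarrow>
        \<bar>real (codeg n E v w) - p^2 * n\<bar> \<le> C0 * max (sqrt (p^2 * n * ln n)) (ln n)) \<and>
     (\<exists>lam phi. spectral_decomp n E lam phi \<and>
        (\<forall>i<n. \<bar>phi 0 i - 1 / sqrt n\<bar> \<le> C0 * (ln n powr (3/2) / (sqrt p * n * ln (p * n)))) \<and>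
        \<bar>lam 0 - p * n\<bar> \<le> eta * (p * n) \<and>
        max \<bar>lam 1\<bar> \<bar>lam (n - 1)\<bar> \<le> C0 * sqrt (p * n))"

text \<open>Simple random walk: transition probabilities and mu_{l,w}.\<close>
definition trans :: "nat \<Rightarrow> (nat \<Rightarrow> nat \<Rightarrow> bool) \<Rightarrow> nat \<Rightarrow> nat \<Rightarrow> real" where
  "trans n E u x = adj E u x / real (deg n E u)"

fun walk_dist :: "nat \<Rightarrow> (nat \<Rightarrow> nat \<Rightarrow> bool) \<Rightarrow> nat \<Rightarrow> nat \<Rightarrow> nat \<Rightarrow> real" where
  "walk_dist n E 0 w x = (if x = w then 1 else 0)"
| "walk_dist n E (Suc l) w x = (\<Sum>u<n. walk_dist n E l w u * trans n E u x)"

text \<open>avoid_dist n E v t u x = P[X_t = x and X_s \<noteq> v for all s \<le> t | X_0 = u].\<close>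
fun avoid_dist :: "nat \<Rightarrow> (nat \<Rightarrow> nat \<Rightarrow> bool) \<Rightarrow> nat \<Rightarrow> nat \<Rightarrow> nat \<Rightarrow> nat \<Rightarrow> real" where
  "avoid_dist n E v 0 u x = (if x = u \<and> u \<noteq> v then 1 else 0)"
| "avoid_dist n E v (Suc t) u x =
     (if x = v then 0 else (\<Sum>y<n. avoid_dist n E v t u y * trans n E y x))"

text \<open>Expected first hitting time of v from u: E[T_v] = sum_{t \<ge> 0} P[T_v > t],
  where T_v = min{t \<ge> 0. X_t = v} (so H v v = 0).\<close>
definition hit_time :: "nat \<Rightarrow> (nat \<Rightarrow> nat \<Rightarrow> bool) \<Rightarrow> nat \<Rightarrow> nat \<Rightarrow> real" where
  "hit_time n E u v = (\<Sum>t. (\<Sum>x<n. avoid_dist n E v t u x))"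

definition hit_time_dist :: "nat \<Rightarrow> (nat \<Rightarrow> nat \<Rightarrow> bool) \<Rightarrow> (nat \<Rightarrow> real) \<Rightarrow> nat \<Rightarrow> real" where
  "hit_time_dist n E \<delta> v = (\<Sum>u<n. \<delta> u * hit_time n E u v)"

end

theory Submission
  imports Defs "HOL-Analysis.Analysis" "Jordan_Normal_Form.Determinant" "HOL-Real_Asymp.Real_Asymp"
begin

text \<open>
  Let P be the walk operator, h the vector of hitting times of v, and
  D t = P^t (mu_{l,w} - mu_{l,w'}). The spectral gap max(|lambda_2|, |lambda_n|) = O(sqrt(pn)),
  together with the concentration of the degrees around pn, makes P contract the norm
  sum_u f(u)^2 / d(u) of mass-zero vectors by the factor L = 8 C0^2 / (pn) per step, so D t is
  pointwise O(L^((l + t)/2)). As l >= 3k + 2 and pn >= n^(1/k) log n, after l steps the walk is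
  within 1/(6n) of stationarity: every vertex reaches v within l steps with probability at least
  1/(6n), and all hitting times are at most 6nl. First-step analysis gives
  <D (t + 1), h> = <D t, h> + (1 + (P h)(v)) (D t)(v); summing over t bounds the difference
  <D 0, h> of the two hitting times by O(n l L^(l/2)) = O(1/sqrt n), more than is claimed.
\<close>

lemma orthonormal_rows_imp_orthonormal_columns:
  fixes phi :: "nat \<Rightarrow> nat \<Rightarrow> real"
  assumes rows: "\<forall>j<n. \<forall>j'<n. (\<Sum>i<n. phi j i * phi j' i) = (if j = j' then 1 else 0)"
    and "i < n" and "i' < n"
  shows "(\<Sum>j<n. phi j i * phi j i') = (if i = i' then 1 else 0)"
proof -
  define P :: "real mat" where "P = mat n n (\<lambda>(j, i). phi j i)"
  have P: "P \<in> carrier_mat n n" "transpose_mat P \<in> carrier_mat n n"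
    unfolding P_def by auto
  have "P * transpose_mat P = 1\<^sub>m n"
  proof (rule eq_matI)
    fix j j' assume "j < dim_row (1\<^sub>m n)" "j' < dim_col (1\<^sub>m n)"
    then show "(P * transpose_mat P) $$ (j, j') = 1\<^sub>m n $$ (j, j')"
      using rows unfolding P_def by (simp add: scalar_prod_def lessThan_atLeast0)
  qed (auto simp: P_def)
  then have "transpose_mat P * P = 1\<^sub>m n"
    using mat_mult_left_right_inverse P by blast
  then have "(transpose_mat P * P) $$ (i, i') = 1\<^sub>m n $$ (i, i')"
    by simp
  then show ?thesis
    using assms(2,3) unfolding P_def by (simp add: scalar_prod_def lessThan_atLeast0)
qed

lemma sum_lessThan_split_head:
  "0 < (n::nat) \<Longrightarrow> (\<Sum>j<n. f j) = f 0 + (\<Sum>j=1..<n. f j)"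
  by (simp add: atLeast0LessThan[symmetric] sum.atLeast_Suc_lessThan)

lemma sum_sq_mult_le:
  fixes x c :: "'a \<Rightarrow> real"
  assumes "\<And>j. j \<in> J \<Longrightarrow> \<bar>x j\<bar> \<le> s"
  shows "(\<Sum>j\<in>J. (x j * c j)^2) \<le> s^2 * (\<Sum>j\<in>J. (c j)^2)"
proof -
  have "(x j * c j)^2 \<le> s^2 * (c j)^2" if "j \<in> J" for j
  proof -
    have "\<bar>x j\<bar>^2 \<le> s^2"
      using assms[OF that] by (intro power_mono) auto
    then show ?thesis
      by (simp add: power_mult_distrib mult_right_mono)
  qed
  then show ?thesis
    by (simp add: sum_distrib_left sum_mono)
qed

lemma sum_div_le_of_lower_bound:
  fixes h d :: "'a \<Rightarrow> real"
  assumes "0 < a" and "\<And>x. x \<in> A \<Longrightarrow> a / 2 \<le> d x" and "\<And>x. x \<in> A \<Longrightarrow> 0 \<le> h x"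
  shows "(\<Sum>x\<in>A. h x / d x) \<le> 2 / a * (\<Sum>x\<in>A. h x)"
proof -
  have "h x / d x \<le> 2 / a * h x" if "x \<in> A" for x
  proof -
    have "0 < d x"
      using assms(1) assms(2)[OF that] by linarith
    then have "h x / d x \<le> h x / (a / 2)"
      using assms that by (intro divide_left_mono) auto
    then show ?thesis
      by (simp add: mult.commute)
  qed
  then show ?thesis
    by (simp add: sum_distrib_left sum_mono)
qed

lemma sum_power_le_inverse:
  fixes r :: real
  assumes "0 \<le> r" and "r < 1"
  shows "(\<Sum>i<N. r^i) \<le> 1 / (1 - r)"
proof -
  have "(\<Sum>i<N. r^i) = (1 - r^N) / (1 - r)"
    using assms by (simp add: sum_gp_strict)
  also have "\<dots> \<le> 1 / (1 - r)"
    using assms by (intro divide_right_mono) auto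
  finally show ?thesis .
qed

lemma le_of_le_plus_geometric:
  fixes x B C r :: real
  assumes "\<And>T. x \<le> B + C * r^T" and "0 \<le> r" and "r < 1"
  shows "x \<le> B"
proof -
  have "(\<lambda>T. B + C * r^T) \<longlonglongrightarrow> B + C * 0"
    using assms(2,3) by (intro tendsto_intros LIMSEQ_power_zero) auto
  then show ?thesis
    using assms(1) by (intro LIMSEQ_le_const[of "\<lambda>T. B + C * r^T"]) auto
qed

lemma mult_sqrt_le:
  fixes c x y :: real
  assumes "0 \<le> c" and "0 \<le> x" and "0 \<le> y" and "c^2 * x \<le> y^2"
  shows "c * sqrt x \<le> y"
proof -
  have "c * sqrt x = sqrt (c^2 * x)"
    using assms by (simp add: real_sqrt_mult)
  also have "\<dots> \<le> sqrt (y^2)"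
    using assms by (intro real_sqrt_le_mono) auto
  also have "\<dots> = y"
    using assms by simp
  finally show ?thesis .
qed

lemma abs_le_of_sq_dev_le:
  fixes a x :: real
  assumes "0 < a" and "(x - a)^2 \<le> a^2 / 32"
  shows "\<bar>x - a\<bar> \<le> a / 2"
proof -
  have "(a / 2)^2 = a^2 / 4"
    by (simp add: power_divide)
  then have "(x - a)^2 \<le> (a / 2)^2"
    using assms(2) zero_le_power2[of "x - a"] by linarith
  then show ?thesis
    using \<open>0 < a\<close> abs_le_square_iff[of "x - a" "a / 2"] by simp
qed

lemma power_div_le_div_cube:
  fixes k l :: nat and x a c :: real
  assumes "0 < k" and "3 * k \<le> l" and "1 \<le> x" and "0 \<le> c" and "x powr (1 / k) \<le> a"
  shows "(c / a)^l \<le> c^l / x^3"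
proof -
  define r where "r = x powr (1 / k)"
  have "1 \<le> r"
    unfolding r_def using assms(3) by (intro ge_one_powr_ge_zero) auto
  have "r ^ k = x"
    unfolding r_def using assms(1,3) by (simp add: powr_power)
  have "(c / a)^l \<le> (c / r)^l"
    using \<open>1 \<le> r\<close> assms(4,5) unfolding r_def[symmetric] by (intro power_mono divide_left_mono) auto
  also have "\<dots> = c^l / r^l"
    by (simp add: power_divide)
  also have "\<dots> \<le> c^l / r^(3 * k)"
    using \<open>1 \<le> r\<close> assms(2,4) by (intro divide_left_mono power_increasing) auto
  also have "r^(3 * k) = x^3"
    by (metis \<open>r ^ k = x\<close> mult.commute power_mult)
  finally show ?thesis .
qed

lemma linear_mult_sqrt_power_le:
  fixes x X K :: real and l :: nat
  assumes "1 \<le> x" and "0 < l" and "0 \<le> X" and "X^l \<le> K / x^3"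
  shows "(1 + 6 * x * l) * sqrt X ^ l \<le> 7 * l * sqrt K / sqrt x"
proof -
  have "sqrt X ^ l \<le> sqrt K / (x * sqrt x)"
    using real_sqrt_le_mono[OF assms(4)] assms(1)
    by (simp add: real_sqrt_power real_sqrt_divide power3_eq_cube real_sqrt_mult)
  moreover have "1 + 6 * x * l \<le> 7 * x * l"
  proof -
    have "1 * 1 \<le> x * real l"
      using assms(1,2) by (intro mult_mono) auto
    then show ?thesis
      by linarith
  qed
  ultimately have "(1 + 6 * x * l) * sqrt X ^ l \<le> (7 * x * l) * (sqrt K / (x * sqrt x))"
    using assms(1,3) by (intro mult_mono) auto
  also have "\<dots> = 7 * l * sqrt K / sqrt x"
    using assms(1) by (simp add: field_simps)
  finally show ?thesis .
qed

lemma inverse_sqrt_le_sqrt_ln_div: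
  fixes a x :: real
  assumes "0 < a" and "a \<le> x" and "1 \<le> ln x"
  shows "1 / sqrt x \<le> sqrt (ln x) / sqrt a"
proof -
  have "x * 1 \<le> x * ln x"
    using assms by (intro mult_left_mono) auto
  then have "sqrt a \<le> sqrt x * sqrt (ln x)"
    using assms(2) by (metis order_trans real_sqrt_le_mono real_sqrt_mult mult_1_right)
  then show ?thesis
    using assms by (simp add: field_simps)
qed

section \<open>Graphs and their spectral decomposition\<close>

lemma adj_commute: "simple_graph n E \<Longrightarrow> adj E x y = adj E y x"
  unfolding simple_graph_def adj_def by auto

lemma adj_eq_0_outside: "simple_graph n E \<Longrightarrow> \<not> (x < n \<and> y < n) \<Longrightarrow> adj E x y = 0"
  unfolding simple_graph_def adj_def by auto

lemma adj_nonneg: "0 \<le> adj E x y"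
  unfolding adj_def by auto

lemma deg_eq_sum_adj: "real (deg n E v) = (\<Sum>u<n. adj E v u)"
proof -
  have "(\<Sum>u<n. adj E v u) = (\<Sum>u\<in>{u. u < n \<and> E v u}. 1)"
    unfolding adj_def by (rule sum.mono_neutral_cong_right) auto
  then show ?thesis
    unfolding deg_def by simp
qed

lemma deg_eq_0_outside: "simple_graph n E \<Longrightarrow> n \<le> u \<Longrightarrow> deg n E u = 0"
  unfolding simple_graph_def deg_def by (auto simp: not_less[symmetric])

lemma spectral_decomp_abs_le:
  assumes "spectral_decomp n E lam phi" and "max \<bar>lam 1\<bar> \<bar>lam (n - 1)\<bar> \<le> s"
    and "1 \<le> j" and "j < n"
  shows "\<bar>lam j\<bar> \<le> s"
proof -
  have "lam j \<le> lam 1" "lam (n - 1) \<le> lam j"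
    using assms(1,3,4) unfolding spectral_decomp_def by auto
  then show ?thesis
    using assms(2) by (simp add: abs_le_iff)
qed

definition walk_step :: "nat \<Rightarrow> (nat \<Rightarrow> nat \<Rightarrow> bool) \<Rightarrow> (nat \<Rightarrow> real) \<Rightarrow> nat \<Rightarrow> real" where
  "walk_step n E f x = (\<Sum>u<n. f u * trans n E u x)"

text \<open>The squared norm of D^(-1/2) f, D the degree matrix. The walk step f \<mapsto> A D^(-1) f is
  self-adjoint for the corresponding inner product.\<close>

definition deg_norm_sq :: "nat \<Rightarrow> (nat \<Rightarrow> nat \<Rightarrow> bool) \<Rightarrow> (nat \<Rightarrow> real) \<Rightarrow> real" where
  "deg_norm_sq n E f = (\<Sum>u<n. (f u)^2 / real (deg n E u))"

definition prob_vector :: "nat \<Rightarrow> (nat \<Rightarrow> real) \<Rightarrow> bool" where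
  "prob_vector n \<mu> \<longleftrightarrow> (\<forall>u<n. 0 \<le> \<mu> u) \<and> (\<Sum>u<n. \<mu> u) = 1"

lemma prob_vector_le_1: "prob_vector n \<mu> \<Longrightarrow> u < n \<Longrightarrow> \<mu> u \<le> 1"
  using member_le_sum[of u "{..<n}" \<mu>] unfolding prob_vector_def by auto

definition survival :: "nat \<Rightarrow> (nat \<Rightarrow> nat \<Rightarrow> bool) \<Rightarrow> nat \<Rightarrow> nat \<Rightarrow> nat \<Rightarrow> real" where
  "survival n E v t u = (\<Sum>x<n. avoid_dist n E v t u x)"

lemma hit_time_eq_suminf_survival: "hit_time n E u v = (\<Sum>t. survival n E v t u)"
  unfolding hit_time_def survival_def ..

locale graph_spectrum =
  fixes n :: nat and E :: "nat \<Rightarrow> nat \<Rightarrow> bool"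
    and lam :: "nat \<Rightarrow> real" and phi :: "nat \<Rightarrow> nat \<Rightarrow> real"
  assumes simple: "simple_graph n E" and spectral: "spectral_decomp n E lam phi"
begin

definition coord :: "(nat \<Rightarrow> real) \<Rightarrow> nat \<Rightarrow> real" where
  "coord f j = (\<Sum>i<n. f i * phi j i)"

definition adj_mult :: "(nat \<Rightarrow> real) \<Rightarrow> nat \<Rightarrow> real" where
  "adj_mult f i = (\<Sum>m<n. adj E i m * f m)"

lemma adj_mult_one: "adj_mult (\<lambda>_. 1) i = real (deg n E i)"
  unfolding adj_mult_def by (simp add: deg_eq_sum_adj)

lemma parseval: "(\<Sum>i<n. f i * g i) = (\<Sum>j<n. coord f j * coord g j)"
proof -
  have columns: "(\<Sum>j<n. phi j i * phi j i') = (if i = i' then 1 else 0)"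
    if "i < n" "i' < n" for i i'
    using orthonormal_rows_imp_orthonormal_columns[of n phi] spectral that
    unfolding spectral_decomp_def by blast
  have "(\<Sum>j<n. coord f j * coord g j)
      = (\<Sum>j<n. \<Sum>i<n. \<Sum>i'<n. f i * g i' * (phi j i * phi j i'))"
    unfolding coord_def sum_product by (simp add: algebra_simps)
  also have "\<dots> = (\<Sum>i<n. \<Sum>i'<n. \<Sum>j<n. f i * g i' * (phi j i * phi j i'))"
    by (subst sum.swap) (rule sum.cong[OF refl], rule sum.swap)
  also have "\<dots> = (\<Sum>i<n. \<Sum>i'<n. f i * g i' * (\<Sum>j<n. phi j i * phi j i'))"
    by (simp add: sum_distrib_left)
  also have "\<dots> = (\<Sum>i<n. f i * g i)"
    by (simp add: columns if_distrib sum.delta cong: if_cong)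
  finally show ?thesis
    by simp
qed

lemma coord_adj_mult: "j < n \<Longrightarrow> coord (adj_mult f) j = lam j * coord f j"
proof -
  assume j: "j < n"
  have eigen: "(\<Sum>i<n. adj E i m * phi j i) = lam j * phi j m" if "m < n" for m
  proof -
    have "(\<Sum>i<n. adj E i m * phi j i) = (\<Sum>i<n. adj E m i * phi j i)"
      by (simp add: adj_commute[OF simple, of _ m])
    then show ?thesis
      using spectral j that unfolding spectral_decomp_def by simp
  qed
  have "coord (adj_mult f) j = (\<Sum>m<n. f m * (\<Sum>i<n. adj E i m * phi j i))"
    unfolding coord_def adj_mult_def sum_distrib_left sum_distrib_right
    by (subst sum.swap) (simp add: mult_ac)
  also have "\<dots> = (\<Sum>m<n. f m * (lam j * phi j m))"
    by (intro sum.cong refl) (simp add: eigen)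
  also have "\<dots> = lam j * coord f j"
    unfolding coord_def by (simp add: sum_distrib_left mult_ac)
  finally show ?thesis .
qed

lemma coord_diff_const: "coord (\<lambda>i. f i - x) j = coord f j - x * coord (\<lambda>_. 1) j"
  unfolding coord_def by (simp add: algebra_simps sum_subtractf sum_distrib_left)

lemma sum_sq_coord_one_tail_le:
  fixes a s e :: real
  assumes "0 < a"
    and tail: "\<And>j. 1 \<le> j \<Longrightarrow> j < n \<Longrightarrow> \<bar>lam j\<bar> \<le> s" and "2 * s \<le> a"
    and dev: "(\<Sum>i<n. (real (deg n E i) - a)^2) \<le> n * e" and "8 * e \<le> a^2"
  shows "(\<Sum>j=1..<n. (coord (\<lambda>_. 1) j)^2) \<le> n / 2"
proof -
  let ?b = "coord (\<lambda>_. 1)"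
  have "(\<Sum>i<n. (real (deg n E i) - a)^2) = (\<Sum>j<n. (coord (\<lambda>i. adj_mult (\<lambda>_. 1) i - a) j)^2)"
    using parseval[of "\<lambda>i. adj_mult (\<lambda>_. 1) i - a" "\<lambda>i. adj_mult (\<lambda>_. 1) i - a"]
    by (simp add: power2_eq_square adj_mult_one)
  also have "\<dots> = (\<Sum>j<n. ((lam j - a) * ?b j)^2)"
    by (intro sum.cong refl) (simp add: coord_diff_const coord_adj_mult algebra_simps)
  finally have total: "(\<Sum>j<n. ((lam j - a) * ?b j)^2) \<le> n * e"
    using dev by simp
  have pointwise: "(a / 2)^2 * (?b j)^2 \<le> ((lam j - a) * ?b j)^2" if "j \<in> {1..<n}" for j
  proof -
    have "a / 2 \<le> \<bar>lam j - a\<bar>"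
      using tail[of j] that assms(3) by auto
    then have "(a / 2)^2 \<le> \<bar>lam j - a\<bar>^2"
      using \<open>0 < a\<close> by (intro power_mono) auto
    then show ?thesis
      by (simp add: power_mult_distrib mult_right_mono)
  qed
  have "(a / 2)^2 * (\<Sum>j=1..<n. (?b j)^2) \<le> (\<Sum>j=1..<n. ((lam j - a) * ?b j)^2)"
    unfolding sum_distrib_left using pointwise by (rule sum_mono)
  also have "\<dots> \<le> (\<Sum>j<n. ((lam j - a) * ?b j)^2)"
    by (intro sum_mono2) auto
  also have "\<dots> \<le> n * e"
    by (rule total)
  also have "\<dots> \<le> n * (a^2 / 8)"
    using assms(5) by (intro mult_left_mono) auto
  also have "\<dots> = (a / 2)^2 * (n / 2)"
    by (simp add: power_divide)
  finally show ?thesis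
    using \<open>0 < a\<close> by (simp add: mult_le_cancel_left)
qed

lemma sum_sq_tail_coord_le:
  assumes "0 < n" and tail: "\<And>j. 1 \<le> j \<Longrightarrow> j < n \<Longrightarrow> \<bar>lam j\<bar> \<le> s"
  shows "(\<Sum>j=1..<n. (lam j * coord g j)^2) \<le> s^2 * (\<Sum>i<n. (g i)^2)"
proof -
  have "(\<Sum>j=1..<n. (lam j * coord g j)^2) \<le> s^2 * (\<Sum>j=1..<n. (coord g j)^2)"
    using tail by (intro sum_sq_mult_le) auto
  also have "\<dots> \<le> s^2 * (\<Sum>j<n. (coord g j)^2)"
    by (intro mult_left_mono sum_mono2) auto
  also have "\<dots> = s^2 * (\<Sum>i<n. (g i)^2)"
    using parseval[of g g] by (simp add: power2_eq_square)
  finally show ?thesis .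
qed

text \<open>The degree vector is close to \<open>a\<close> times the all-ones vector, so by the spectral gap
  it is nearly parallel to \<open>phi 0\<close>; orthogonality of \<open>g\<close> to it then controls the
  \<open>phi 0\<close>-coefficient of \<open>g\<close> by the remaining ones, via Cauchy--Schwarz.\<close>

lemma sq_top_coord_le:
  fixes a s e :: real
  assumes "0 < n" and "0 < a"
    and tail: "\<And>j. 1 \<le> j \<Longrightarrow> j < n \<Longrightarrow> \<bar>lam j\<bar> \<le> s" and "2 * s \<le> a"
    and "(\<Sum>i<n. (real (deg n E i) - a)^2) \<le> n * e" and "8 * e \<le> a^2"
    and orth: "(\<Sum>i<n. g i * real (deg n E i)) = 0"
  shows "(lam 0 * coord g 0)^2 \<le> s^2 * (\<Sum>i<n. (g i)^2)"
proof -
  note split = sum_lessThan_split_head[OF \<open>0 < n\<close>]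
  let ?b = "coord (\<lambda>_. 1)" and ?c = "coord g"
  define G where "G = (\<Sum>i<n. (g i)^2)"
  have "0 \<le> G"
    unfolding G_def by (simp add: sum_nonneg)
  have b_tail: "(\<Sum>j=1..<n. (?b j)^2) \<le> n / 2"
    by (rule sum_sq_coord_one_tail_le[OF assms(2-6)])
  have "(\<Sum>j<n. (?b j)^2) = n"
    using parseval[of "\<lambda>_. 1" "\<lambda>_. 1"] by (simp add: power2_eq_square)
  then have b_head: "n / 2 \<le> (?b 0)^2"
    using b_tail split[of "\<lambda>j. (?b j)^2"] by linarith
  have "0 = (\<Sum>j<n. ?c j * coord (adj_mult (\<lambda>_. 1)) j)"
    using orth parseval[of g "adj_mult (\<lambda>_. 1)"] by (simp add: adj_mult_one)
  also have "\<dots> = (\<Sum>j<n. (lam j * ?c j) * ?b j)"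
    by (intro sum.cong refl) (simp add: coord_adj_mult)
  finally have "(lam 0 * ?c 0) * ?b 0 = - (\<Sum>j=1..<n. (lam j * ?c j) * ?b j)"
    using split[of "\<lambda>j. (lam j * ?c j) * ?b j"] by simp
  then have "(lam 0 * ?c 0)^2 * (?b 0)^2 = (\<Sum>j=1..<n. (lam j * ?c j) * ?b j)^2"
    by (simp add: power_mult_distrib[symmetric])
  also have "\<dots> \<le> (\<Sum>j=1..<n. (lam j * ?c j)^2) * (\<Sum>j=1..<n. (?b j)^2)"
    by (rule Cauchy_Schwarz_ineq_sum)
  also have "\<dots> \<le> (s^2 * G) * (n / 2)"
    using sum_sq_tail_coord_le[OF \<open>0 < n\<close> tail] b_tail \<open>0 \<le> G\<close> unfolding G_def
    by (intro mult_mono) (auto intro: sum_nonneg)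
  also have "\<dots> \<le> (s^2 * G) * (?b 0)^2"
    using b_head \<open>0 \<le> G\<close> by (intro mult_left_mono) auto
  finally have scaled: "(lam 0 * ?c 0)^2 * (?b 0)^2 \<le> (s^2 * G) * (?b 0)^2" .
  have "0 < real n / 2"
    using \<open>0 < n\<close> by simp
  then have "0 < (?b 0)^2"
    using b_head by linarith
  with scaled have "(lam 0 * ?c 0)^2 \<le> s^2 * G"
    by (rule mult_right_le_imp_le)
  then show ?thesis
    unfolding G_def .
qed

lemma sum_sq_adj_mult_le:
  fixes a s e :: real
  assumes "0 < a"
    and tail: "\<And>j. 1 \<le> j \<Longrightarrow> j < n \<Longrightarrow> \<bar>lam j\<bar> \<le> s" and "2 * s \<le> a"
    and "(\<Sum>i<n. (real (deg n E i) - a)^2) \<le> n * e" and "8 * e \<le> a^2"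
    and "(\<Sum>i<n. g i * real (deg n E i)) = 0"
  shows "(\<Sum>i<n. (adj_mult g i)^2) \<le> 2 * s^2 * (\<Sum>i<n. (g i)^2)"
proof (cases "n = 0")
  case True
  then show ?thesis
    by simp
next
  case False
  then have "0 < n"
    by simp
  have "(\<Sum>i<n. (adj_mult g i)^2) = (\<Sum>j<n. (coord (adj_mult g) j)^2)"
    using parseval[of "adj_mult g" "adj_mult g"] by (simp add: power2_eq_square)
  also have "\<dots> = (\<Sum>j<n. (lam j * coord g j)^2)"
    by (intro sum.cong refl) (simp add: coord_adj_mult)
  also have "\<dots> = (lam 0 * coord g 0)^2 + (\<Sum>j=1..<n. (lam j * coord g j)^2)"
    by (rule sum_lessThan_split_head[OF \<open>0 < n\<close>])
  also have "\<dots> \<le> 2 * s^2 * (\<Sum>i<n. (g i)^2)"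
  proof -
    have "(lam 0 * coord g 0)^2 \<le> s^2 * (\<Sum>i<n. (g i)^2)"
      by (rule sq_top_coord_le[OF \<open>0 < n\<close> assms])
    moreover have "(\<Sum>j=1..<n. (lam j * coord g j)^2) \<le> s^2 * (\<Sum>i<n. (g i)^2)"
      by (rule sum_sq_tail_coord_le[OF \<open>0 < n\<close> tail])
    ultimately show ?thesis
      by linarith
  qed
  finally show ?thesis .
qed

lemma deg_norm_sq_walk_step_le:
  fixes a s e :: real
  assumes "0 < a"
    and "\<And>j. 1 \<le> j \<Longrightarrow> j < n \<Longrightarrow> \<bar>lam j\<bar> \<le> s" and "2 * s \<le> a"
    and "(\<Sum>i<n. (real (deg n E i) - a)^2) \<le> n * e" and "8 * e \<le> a^2"
    and deg_lower: "\<And>u. u < n \<Longrightarrow> a / 2 \<le> real (deg n E u)"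
    and "(\<Sum>u<n. f u) = 0"
  shows "deg_norm_sq n E (walk_step n E f) \<le> 8 * s^2 / a^2 * deg_norm_sq n E f"
proof -
  txt \<open>With \<open>g = f / d\<close> the step is \<open>A g\<close>, and \<open>g\<close> is orthogonal to the degree vector.\<close>
  define g where "g u = f u / real (deg n E u)" for u
  have deg_pos: "0 < real (deg n E u)" if "u < n" for u
    using deg_lower[OF that] \<open>0 < a\<close> by linarith
  have step: "walk_step n E f x = adj_mult g x" for x
    unfolding walk_step_def adj_mult_def g_def trans_def
    by (intro sum.cong refl) (simp add: adj_commute[OF simple, of x])
  have orth: "(\<Sum>i<n. g i * real (deg n E i)) = 0"
    using assms(7) deg_pos by (simp add: g_def)
  have "(\<Sum>i<n. (g i)^2) = (\<Sum>i<n. (f i)^2 / real (deg n E i) / real (deg n E i))"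
    by (simp add: g_def power2_eq_square)
  also have "\<dots> \<le> 2 / a * deg_norm_sq n E f"
    unfolding deg_norm_sq_def using deg_lower deg_pos
    by (intro sum_div_le_of_lower_bound[OF \<open>0 < a\<close>]) auto
  finally have "2 * s^2 * (\<Sum>i<n. (g i)^2) \<le> 2 * s^2 * (2 / a * deg_norm_sq n E f)"
    by (intro mult_left_mono) auto
  with sum_sq_adj_mult_le[OF assms(1-5) orth]
  have adj_g: "(\<Sum>x<n. (adj_mult g x)^2) \<le> 2 * s^2 * (2 / a * deg_norm_sq n E f)"
    by linarith
  have "deg_norm_sq n E (walk_step n E f) = (\<Sum>x<n. (adj_mult g x)^2 / real (deg n E x))"
    unfolding deg_norm_sq_def step ..
  also have "\<dots> \<le> 2 / a * (\<Sum>x<n. (adj_mult g x)^2)"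
    using deg_lower by (intro sum_div_le_of_lower_bound[OF \<open>0 < a\<close>]) auto
  also have "\<dots> \<le> 2 / a * (2 * s^2 * (2 / a * deg_norm_sq n E f))"
    using adj_g \<open>0 < a\<close> by (intro mult_left_mono) auto
  also have "\<dots> = 8 * s^2 / a^2 * deg_norm_sq n E f"
    by (simp add: field_simps power2_eq_square)
  finally show ?thesis .
qed

end

section \<open>Random walks and hitting times\<close>

locale walk_graph =
  fixes n :: nat and E :: "nat \<Rightarrow> nat \<Rightarrow> bool"
  assumes simple: "simple_graph n E" and deg_pos: "\<And>u. u < n \<Longrightarrow> 0 < deg n E u"
begin

lemma trans_nonneg: "0 \<le> trans n E u x"
  unfolding trans_def by (simp add: adj_nonneg)

lemma trans_eq_0_outside: "n \<le> x \<Longrightarrow> trans n E u x = 0"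
  unfolding trans_def using adj_eq_0_outside[OF simple] by simp

lemma sum_trans: "u < n \<Longrightarrow> (\<Sum>x<n. trans n E u x) = 1"
  using deg_pos[of u] unfolding trans_def
  by (simp add: sum_divide_distrib[symmetric] deg_eq_sum_adj[symmetric])

lemma sum_walk_step: "(\<Sum>x<n. walk_step n E f x) = (\<Sum>u<n. f u)"
proof -
  have "(\<Sum>x<n. walk_step n E f x) = (\<Sum>u<n. f u * (\<Sum>x<n. trans n E u x))"
    unfolding walk_step_def by (subst sum.swap) (simp add: sum_distrib_left)
  also have "\<dots> = (\<Sum>u<n. f u)"
    by (simp add: sum_trans)
  finally show ?thesis .
qed

lemma sum_funpow_walk_step: "(\<Sum>x<n. (walk_step n E ^^ t) f x) = (\<Sum>u<n. f u)"
  by (induction t) (simp_all add: sum_walk_step)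

lemma walk_step_diff: "walk_step n E (\<lambda>x. f x - g x) = (\<lambda>x. walk_step n E f x - walk_step n E g x)"
  unfolding walk_step_def by (simp add: sum_subtractf left_diff_distrib)

lemma funpow_walk_step_diff:
  "(walk_step n E ^^ t) (\<lambda>x. f x - g x) = (\<lambda>x. (walk_step n E ^^ t) f x - (walk_step n E ^^ t) g x)"
  by (induction t) (simp_all add: walk_step_diff)

lemma prob_vector_walk_step: "prob_vector n \<mu> \<Longrightarrow> prob_vector n (walk_step n E \<mu>)"
  unfolding prob_vector_def walk_step_def
  by (auto simp: sum_walk_step[unfolded walk_step_def] intro!: sum_nonneg mult_nonneg_nonneg trans_nonneg)

lemma walk_dist_Suc: "walk_dist n E (Suc t) w = walk_step n E (walk_dist n E t w)"
  by (rule ext) (simp add: walk_step_def)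

lemma walk_dist_add: "walk_dist n E (m + t) w = (walk_step n E ^^ t) (walk_dist n E m w)"
  by (induction t) (simp_all add: walk_dist_Suc)

lemma walk_dist_eq_funpow: "walk_dist n E t w = (walk_step n E ^^ t) (walk_dist n E 0 w)"
  by (induction t) (simp_all add: walk_dist_Suc)

lemma prob_vector_walk_dist: "w < n \<Longrightarrow> prob_vector n (walk_dist n E t w)"
proof (induction t)
  case 0
  then show ?case
    by (simp add: prob_vector_def sum.delta')
next
  case (Suc t)
  then show ?case
    by (simp add: walk_dist_Suc prob_vector_walk_step)
qed

lemma walk_dist_nonneg: "0 \<le> walk_dist n E t w x"
  by (induction t arbitrary: x) (auto intro!: sum_nonneg mult_nonneg_nonneg trans_nonneg)

definition stat_dist :: "nat \<Rightarrow> real" where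
  "stat_dist u = real (deg n E u) / (\<Sum>y<n. real (deg n E y))"

lemma walk_step_stat_dist: "walk_step n E stat_dist = stat_dist"
proof (rule ext)
  fix x
  show "walk_step n E stat_dist x = stat_dist x"
  proof (cases "x < n")
    case True
    have "walk_step n E stat_dist x = (\<Sum>u<n. adj E x u) / (\<Sum>y<n. real (deg n E y))"
      unfolding walk_step_def stat_dist_def trans_def sum_divide_distrib
      by (intro sum.cong refl) (use deg_pos in \<open>auto simp: adj_commute[OF simple, of x]\<close>)
    then show ?thesis
      by (simp add: stat_dist_def deg_eq_sum_adj[of n E x])
  next
    case False
    then show ?thesis
      by (simp add: walk_step_def stat_dist_def trans_eq_0_outside deg_eq_0_outside[OF simple])
  qed
qed

lemma funpow_walk_step_stat_dist: "(walk_step n E ^^ t) stat_dist = stat_dist"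
  by (induction t) (simp_all add: walk_step_stat_dist)

lemma prob_vector_stat_dist: "0 < n \<Longrightarrow> prob_vector n stat_dist"
proof -
  assume "0 < n"
  then have "0 < (\<Sum>y<n. real (deg n E y))"
    using deg_pos by (intro sum_pos) auto
  then show ?thesis
    unfolding prob_vector_def stat_dist_def by (simp add: sum_divide_distrib[symmetric])
qed

lemma avoid_dist_target: "avoid_dist n E v t u v = 0"
  by (cases t) auto

lemma avoid_dist_from_target: "avoid_dist n E v t v x = 0"
  by (induction t arbitrary: x) auto

lemma avoid_dist_nonneg: "0 \<le> avoid_dist n E v t u x"
  by (induction t arbitrary: x) (auto intro!: sum_nonneg mult_nonneg_nonneg trans_nonneg)

lemma avoid_dist_eq_0_outside: "u < n \<Longrightarrow> n \<le> x \<Longrightarrow> avoid_dist n E v t u x = 0"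
  by (cases t) (auto simp: trans_eq_0_outside)

lemma avoid_dist_le_walk_dist: "avoid_dist n E v t u x \<le> walk_dist n E t u x"
proof (induction t arbitrary: x)
  case 0
  then show ?case
    by auto
next
  case (Suc t)
  show ?case
  proof (cases "x = v")
    case True
    then show ?thesis
      using walk_dist_nonneg[of "Suc t" u x] by (simp del: walk_dist.simps)
  next
    case False
    then show ?thesis
      using Suc by (auto intro!: sum_mono mult_right_mono trans_nonneg)
  qed
qed

lemma avoid_dist_add:
  assumes "u < n"
  shows "avoid_dist n E v (t + s) u x = (\<Sum>y<n. avoid_dist n E v t u y * avoid_dist n E v s y x)"
proof (induction s arbitrary: x)
  case 0
  have "(\<Sum>y<n. avoid_dist n E v t u y * avoid_dist n E v 0 y x)
      = (\<Sum>y<n. if y = x then (if x \<noteq> v then avoid_dist n E v t u y else 0) else 0)"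
    by (intro sum.cong refl) auto
  also have "\<dots> = (if x < n \<and> x \<noteq> v then avoid_dist n E v t u x else 0)"
    by (simp add: sum.delta')
  also have "\<dots> = avoid_dist n E v t u x"
    using avoid_dist_target avoid_dist_eq_0_outside[OF assms] by auto
  finally show ?case
    by simp
next
  case (Suc s)
  show ?case
  proof (cases "x = v")
    case True
    then show ?thesis
      by simp
  next
    case False
    have "avoid_dist n E v (t + Suc s) u x
        = (\<Sum>z<n. \<Sum>y<n. avoid_dist n E v t u y * avoid_dist n E v s y z * trans n E z x)"
      using False Suc by (simp add: sum_distrib_right)
    also have "\<dots> = (\<Sum>y<n. \<Sum>z<n. avoid_dist n E v t u y * avoid_dist n E v s y z * trans n E z x)"
      by (rule sum.swap)
    also have "\<dots> = (\<Sum>y<n. avoid_dist n E v t u y * avoid_dist n E v (Suc s) y x)"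
      using False by (simp add: sum_distrib_left mult.assoc)
    finally show ?thesis .
  qed
qed

lemma survival_add:
  "u < n \<Longrightarrow> survival n E v (t + s) u = (\<Sum>y<n. avoid_dist n E v t u y * survival n E v s y)"
  unfolding survival_def by (simp add: avoid_dist_add sum_distrib_left) (rule sum.swap)

lemma survival_nonneg: "0 \<le> survival n E v t u"
  unfolding survival_def by (intro sum_nonneg avoid_dist_nonneg)

lemma survival_target: "survival n E v t v = 0"
  unfolding survival_def by (simp add: avoid_dist_from_target)

lemma survival_0: "u < n \<Longrightarrow> survival n E v 0 u = (if u = v then 0 else 1)"
  unfolding survival_def by (simp add: sum.delta')

lemma avoid_dist_1:
  assumes "u < n" and "u \<noteq> v"
  shows "avoid_dist n E v 1 u y = (if y = v then 0 else trans n E u y)"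
proof -
  have "(if z = u \<and> u \<noteq> v then 1 else 0) * trans n E z y = (if z = u then trans n E u y else 0)" for z
    using assms by simp
  then have "(\<Sum>z<n. (if z = u \<and> u \<noteq> v then 1 else 0) * trans n E z y) = trans n E u y"
    using assms(1) by (simp add: sum.delta')
  then show ?thesis
    by simp
qed

lemma survival_Suc:
  assumes "u < n" and "u \<noteq> v"
  shows "survival n E v (Suc s) u = (\<Sum>y<n. trans n E u y * survival n E v s y)"
proof -
  have "survival n E v (Suc s) u = (\<Sum>y<n. avoid_dist n E v 1 u y * survival n E v s y)"
    using survival_add[OF assms(1), of v 1 s] by simp
  also have "\<dots> = (\<Sum>y<n. trans n E u y * survival n E v s y)"
    by (intro sum.cong refl) (simp only: avoid_dist_1[OF assms], simp add: survival_target)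
  finally show ?thesis .
qed

lemma survival_le:
  assumes "y < n" and "v < n"
  shows "survival n E v t y \<le> 1 - walk_dist n E t y v"
proof -
  have "survival n E v t y \<le> (\<Sum>x<n. if x = v then 0 else walk_dist n E t y x)"
    unfolding survival_def using avoid_dist_le_walk_dist avoid_dist_target by (intro sum_mono) auto
  also have "\<dots> = (\<Sum>x<n. walk_dist n E t y x - (if x = v then walk_dist n E t y v else 0))"
    by (intro sum.cong refl) auto
  also have "\<dots> = 1 - walk_dist n E t y v"
    using assms prob_vector_walk_dist[OF assms(1)]
    by (simp add: sum_subtractf sum.delta' prob_vector_def)
  finally show ?thesis .
qed

end

locale reachable_target = walk_graph +
  fixes v l :: nat and q :: real
  assumes target: "v < n" and period_pos: "0 < l" and q_pos: "0 < q"
    and hit_prob: "\<And>y. y < n \<Longrightarrow> q \<le> walk_dist n E l y v"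
begin

lemma q_le_1: "q \<le> 1"
  using hit_prob[OF target] prob_vector_le_1[OF prob_vector_walk_dist[OF target, of l] target]
  by linarith

lemma survival_add_period_le:
  assumes "u < n"
  shows "survival n E v (t + l) u \<le> (1 - q) * survival n E v t u"
proof -
  have period: "survival n E v l y \<le> 1 - q" if "y < n" for y
    using survival_le[OF that target, of l] hit_prob[OF that] by linarith
  have "survival n E v (t + l) u = (\<Sum>y<n. avoid_dist n E v t u y * survival n E v l y)"
    by (rule survival_add[OF assms])
  also have "\<dots> \<le> (\<Sum>y<n. avoid_dist n E v t u y * (1 - q))"
    using period by (intro sum_mono mult_left_mono avoid_dist_nonneg) auto
  also have "\<dots> = (1 - q) * survival n E v t u"
    unfolding survival_def by (simp add: sum_distrib_left mult.commute)
  finally show ?thesis .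
qed

lemma survival_le_geometric: "u < n \<Longrightarrow> survival n E v (j * l + r) u \<le> (1 - q)^j"
proof (induction j)
  case 0
  then show ?case
    using survival_le[OF 0 target, of r] walk_dist_nonneg[of r u v] by simp
next
  case (Suc j)
  have "survival n E v (Suc j * l + r) u = survival n E v ((j * l + r) + l) u"
    by (simp add: algebra_simps)
  also have "\<dots> \<le> (1 - q) * survival n E v (j * l + r) u"
    by (rule survival_add_period_le[OF Suc.prems])
  also have "\<dots> \<le> (1 - q) * (1 - q)^j"
    using Suc q_le_1 by (intro mult_left_mono) auto
  finally show ?case
    by simp
qed

lemma sum_survival_le: "u < n \<Longrightarrow> (\<Sum>t<N. survival n E v t u) \<le> l / q"
proof -
  assume u: "u < n"
  have "(\<Sum>t<N. survival n E v t u) \<le> (\<Sum>t<N * l. survival n E v t u)"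
    using period_pos by (intro sum_mono2) (auto simp: survival_nonneg)
  also have "\<dots> = (\<Sum>i<N. \<Sum>t\<in>{i * l..<i * l + l}. survival n E v t u)"
    by (rule sum.nat_group[symmetric])
  also have "\<dots> \<le> (\<Sum>i<N. \<Sum>t\<in>{i * l..<i * l + l}. (1 - q)^i)"
  proof (intro sum_mono)
    fix i t
    assume "t \<in> {i * l..<i * l + l}"
    then have "t = i * l + (t - i * l)"
      by auto
    then show "survival n E v t u \<le> (1 - q)^i"
      using survival_le_geometric[OF u, of i "t - i * l"] by metis
  qed
  also have "\<dots> = l * (\<Sum>i<N. (1 - q)^i)"
    by (simp add: sum_distrib_left)
  also have "\<dots> \<le> l * (1 / q)"
    using sum_power_le_inverse[of "1 - q" N] q_pos q_le_1 by (intro mult_left_mono) auto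
  finally show ?thesis
    by simp
qed

lemma summable_survival: "u < n \<Longrightarrow> summable (\<lambda>t. survival n E v t u)"
  using sum_survival_le[of u "Suc _"]
  by (intro bounded_imp_summable[where B = "l / q"])
    (auto simp: survival_nonneg lessThan_Suc_atMost[symmetric])

lemma hit_time_le: "u < n \<Longrightarrow> hit_time n E u v \<le> l / q"
  unfolding hit_time_eq_suminf_survival
  using summable_survival sum_survival_le by (intro suminf_le_const) auto

lemma hit_time_nonneg: "u < n \<Longrightarrow> 0 \<le> hit_time n E u v"
  unfolding hit_time_eq_suminf_survival
  using summable_survival survival_nonneg by (intro suminf_nonneg) auto

lemma hit_time_target: "hit_time n E v v = 0"
  unfolding hit_time_eq_suminf_survival by (simp add: survival_target)

lemma hit_time_first_step:
  assumes "u < n" and "u \<noteq> v"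
  shows "hit_time n E u v = 1 + (\<Sum>y<n. trans n E u y * hit_time n E y v)"
proof -
  have "hit_time n E u v - 1 = (\<Sum>t. survival n E v (Suc t) u)"
    using suminf_split_head[OF summable_survival[OF assms(1)]] survival_0[OF assms(1)] assms(2)
    unfolding hit_time_eq_suminf_survival by simp
  also have "\<dots> = (\<Sum>t. \<Sum>y<n. trans n E u y * survival n E v t y)"
    using survival_Suc[OF assms] by simp
  also have "\<dots> = (\<Sum>y<n. \<Sum>t. trans n E u y * survival n E v t y)"
    by (rule suminf_sum) (auto intro: summable_mult summable_survival)
  also have "\<dots> = (\<Sum>y<n. trans n E u y * hit_time n E y v)"
    unfolding hit_time_eq_suminf_survival by (intro sum.cong refl suminf_mult summable_survival) auto
  finally show ?thesis
    by simp
qed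

text \<open>First-step analysis: off \<open>v\<close> the hitting time satisfies \<open>h = 1 + P h\<close>, so pairing with
  \<open>h\<close> commutes with a walk step up to a correction at \<open>v\<close> involving \<open>(P h) v\<close>.\<close>

lemma sum_walk_step_mult_hit_time:
  assumes "(\<Sum>u<n. f u) = 0"
  shows "(\<Sum>u<n. walk_step n E f u * hit_time n E u v)
       = (\<Sum>u<n. f u * hit_time n E u v) + (1 + (\<Sum>y<n. trans n E v y * hit_time n E y v)) * f v"
proof -
  define R where "R = (\<Sum>y<n. trans n E v y * hit_time n E y v)"
  have mean: "(\<Sum>y<n. trans n E z y * hit_time n E y v)
      = hit_time n E z v - 1 + (if z = v then 1 + R else 0)" if "z < n" for z
    using hit_time_first_step[OF that] by (cases "z = v") (simp_all add: R_def hit_time_target)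
  have "(\<Sum>u<n. walk_step n E f u * hit_time n E u v)
      = (\<Sum>z<n. f z * (\<Sum>y<n. trans n E z y * hit_time n E y v))"
    unfolding walk_step_def sum_distrib_right sum_distrib_left by (subst sum.swap) (simp add: mult_ac)
  also have "\<dots> = (\<Sum>z<n. f z * hit_time n E z v - f z + (if z = v then (1 + R) * f z else 0))"
  proof (intro sum.cong refl)
    fix z
    assume "z \<in> {..<n}"
    then have "f z * (\<Sum>y<n. trans n E z y * hit_time n E y v)
        = f z * (hit_time n E z v - 1 + (if z = v then 1 + R else 0))"
      by (simp add: mean)
    then show "f z * (\<Sum>y<n. trans n E z y * hit_time n E y v)
        = f z * hit_time n E z v - f z + (if z = v then (1 + R) * f z else 0)"
      by (simp add: algebra_simps)
  qed
  also have "\<dots> = (\<Sum>u<n. f u * hit_time n E u v) + (1 + R) * f v"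
    using assms target by (simp add: sum.distrib sum_subtractf sum.delta')
  finally show ?thesis
    unfolding R_def .
qed

lemma sum_trans_mult_hit_time_bounds:
  shows "0 \<le> (\<Sum>y<n. trans n E v y * hit_time n E y v)"
    and "(\<Sum>y<n. trans n E v y * hit_time n E y v) \<le> l / q"
proof -
  show "0 \<le> (\<Sum>y<n. trans n E v y * hit_time n E y v)"
    using hit_time_nonneg trans_nonneg by (intro sum_nonneg) auto
  have "(\<Sum>y<n. trans n E v y * hit_time n E y v) \<le> (\<Sum>y<n. trans n E v y * (l / q))"
    using hit_time_le trans_nonneg by (intro sum_mono mult_left_mono) auto
  also have "\<dots> = l / q"
    by (simp only: sum_distrib_right[symmetric] sum_trans[OF target] mult_1_left)
  finally show "(\<Sum>y<n. trans n E v y * hit_time n E y v) \<le> l / q" .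
qed

lemma sum_mult_hit_time_telescope:
  assumes "(\<Sum>u<n. f u) = 0"
  shows "(\<Sum>u<n. f u * hit_time n E u v)
       = (\<Sum>u<n. (walk_step n E ^^ T) f u * hit_time n E u v)
         - (1 + (\<Sum>y<n. trans n E v y * hit_time n E y v)) * (\<Sum>t<T. (walk_step n E ^^ t) f v)"
proof (induction T)
  case 0
  then show ?case
    by simp
next
  case (Suc T)
  have "(\<Sum>u<n. (walk_step n E ^^ T) f u) = 0"
    using assms by (simp add: sum_funpow_walk_step)
  with Suc show ?case
    by (simp add: sum_walk_step_mult_hit_time ring_distribs)
qed

lemma hit_time_dist_diff_le:
  assumes "(\<Sum>u<n. \<mu> u) = (\<Sum>u<n. \<nu> u)" and "0 \<le> r" and "r < 1"
    and decay: "\<And>t u. u < n \<Longrightarrow> \<bar>(walk_step n E ^^ t) \<mu> u - (walk_step n E ^^ t) \<nu> u\<bar> \<le> K * r^t"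
  shows "\<bar>hit_time_dist n E \<mu> v - hit_time_dist n E \<nu> v\<bar> \<le> (1 + l / q) * K / (1 - r)"
proof -
  define f where "f u = \<mu> u - \<nu> u" for u
  define h where "h u = hit_time n E u v" for u
  define R where "R = (\<Sum>y<n. trans n E v y * h y)"
  define M where "M = l / q"
  have "0 \<le> R" and "R \<le> M"
    using sum_trans_mult_hit_time_bounds unfolding R_def M_def h_def by auto
  have f_decay: "\<bar>(walk_step n E ^^ t) f u\<bar> \<le> K * r^t" if "u < n" for t u
    using decay[OF that] unfolding f_def funpow_walk_step_diff .
  have "(\<Sum>u<n. f u) = 0"
    unfolding f_def using assms(1) by (simp add: sum_subtractf)
  note telescope = sum_mult_hit_time_telescope[OF this, folded h_def, folded R_def]
  have h: "0 \<le> h u" "h u \<le> M" if "u < n" for u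
    using hit_time_nonneg[OF that] hit_time_le[OF that] unfolding h_def M_def by auto
  have "0 \<le> K"
    using f_decay[OF target, of 0] by simp
  have "\<bar>\<Sum>u<n. f u * h u\<bar> \<le> (1 + M) * (K / (1 - r)) + n * K * M * r^T" for T
  proof -
    have "\<bar>(walk_step n E ^^ T) f u * h u\<bar> \<le> K * r^T * M" if "u < n" for u
      using f_decay[OF that, of T] h[OF that] \<open>0 \<le> K\<close> \<open>0 \<le> r\<close>
      by (auto simp: abs_mult intro: mult_mono)
    then have "\<bar>\<Sum>u<n. (walk_step n E ^^ T) f u * h u\<bar> \<le> (\<Sum>u<n. K * r^T * M)"
      by (intro order_trans[OF sum_abs] sum_mono) auto
    then have far: "\<bar>\<Sum>u<n. (walk_step n E ^^ T) f u * h u\<bar> \<le> n * K * M * r^T"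
      by (simp add: mult_ac)
    have "\<bar>\<Sum>t<T. (walk_step n E ^^ t) f v\<bar> \<le> K * (\<Sum>t<T. r^t)"
      using f_decay[OF target] by (auto simp: sum_distrib_left intro: order_trans[OF sum_abs] sum_mono)
    also have "\<dots> \<le> K / (1 - r)"
      using mult_left_mono[OF sum_power_le_inverse[OF assms(2,3)] \<open>0 \<le> K\<close>] by simp
    finally have near: "(1 + R) * \<bar>\<Sum>t<T. (walk_step n E ^^ t) f v\<bar> \<le> (1 + M) * (K / (1 - r))"
      using \<open>0 \<le> R\<close> \<open>R \<le> M\<close> \<open>0 \<le> K\<close> assms(3) by (intro mult_mono) auto
    have "\<bar>\<Sum>u<n. f u * h u\<bar> \<le> \<bar>\<Sum>u<n. (walk_step n E ^^ T) f u * h u\<bar>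
        + (1 + R) * \<bar>\<Sum>t<T. (walk_step n E ^^ t) f v\<bar>"
      unfolding telescope[of T] using \<open>0 \<le> R\<close>
        abs_triangle_ineq4[of "\<Sum>u<n. (walk_step n E ^^ T) f u * h u"
          "(1 + R) * (\<Sum>t<T. (walk_step n E ^^ t) f v)"]
      by (simp add: abs_mult)
    with far near show ?thesis
      by linarith
  qed
  then have "\<bar>\<Sum>u<n. f u * h u\<bar> \<le> (1 + M) * (K / (1 - r))"
    by (rule le_of_le_plus_geometric[OF _ assms(2,3)])
  moreover have "hit_time_dist n E \<mu> v - hit_time_dist n E \<nu> v = (\<Sum>u<n. f u * h u)"
    unfolding hit_time_dist_def f_def h_def by (simp add: sum_subtractf left_diff_distrib)
  ultimately show ?thesis
    unfolding M_def by simp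
qed

end

section \<open>Mixing of a contracting walk\<close>

locale contracting_walk = walk_graph +
  fixes a L :: real
  assumes a_pos: "0 < a"
    and deg_lower: "\<And>u. u < n \<Longrightarrow> a / 2 \<le> real (deg n E u)"
    and deg_upper: "\<And>u. u < n \<Longrightarrow> real (deg n E u) \<le> 3 * a / 2"
    and L_nonneg: "0 \<le> L"
    and contraction: "\<And>f. (\<Sum>u<n. f u) = 0 \<Longrightarrow>
      deg_norm_sq n E (walk_step n E f) \<le> L * deg_norm_sq n E f"
begin

lemma deg_norm_sq_nonneg: "0 \<le> deg_norm_sq n E f"
  unfolding deg_norm_sq_def by (intro sum_nonneg) auto

lemma deg_norm_sq_funpow_le:
  "(\<Sum>u<n. f u) = 0 \<Longrightarrow> deg_norm_sq n E ((walk_step n E ^^ t) f) \<le> L^t * deg_norm_sq n E f"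
proof (induction t)
  case 0
  then show ?case
    by simp
next
  case (Suc t)
  have "deg_norm_sq n E ((walk_step n E ^^ Suc t) f) \<le> L * deg_norm_sq n E ((walk_step n E ^^ t) f)"
    using contraction sum_funpow_walk_step Suc.prems by simp
  also have "\<dots> \<le> L * (L^t * deg_norm_sq n E f)"
    using Suc L_nonneg by (intro mult_left_mono) auto
  finally show ?case
    by (simp add: mult.assoc)
qed

lemma sq_le_deg_norm_sq: "x < n \<Longrightarrow> (f x)^2 \<le> 3 * a / 2 * deg_norm_sq n E f"
proof -
  assume x: "x < n"
  have "(f x)^2 / real (deg n E x) \<le> deg_norm_sq n E f"
    unfolding deg_norm_sq_def using x by (intro member_le_sum) auto
  then have "(f x)^2 \<le> real (deg n E x) * deg_norm_sq n E f"
    using deg_pos[OF x] by (simp add: field_simps)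
  also have "\<dots> \<le> 3 * a / 2 * deg_norm_sq n E f"
    using deg_upper[OF x] deg_norm_sq_nonneg by (intro mult_right_mono) auto
  finally show ?thesis .
qed

lemma deg_norm_sq_prob_diff_le:
  assumes "prob_vector n \<mu>" and "prob_vector n \<nu>"
  shows "deg_norm_sq n E (\<lambda>u. \<mu> u - \<nu> u) \<le> 4 / a"
proof -
  have "(\<mu> u - \<nu> u)^2 \<le> \<mu> u + \<nu> u" if "u < n" for u
  proof -
    have "0 \<le> \<mu> u" "0 \<le> \<nu> u" "\<mu> u \<le> 1" "\<nu> u \<le> 1"
      using assms prob_vector_le_1 that unfolding prob_vector_def by auto
    then have "\<bar>\<mu> u - \<nu> u\<bar> * \<bar>\<mu> u - \<nu> u\<bar> \<le> \<bar>\<mu> u - \<nu> u\<bar> * 1"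
      by (intro mult_left_mono) auto
    then show ?thesis
      using \<open>0 \<le> \<mu> u\<close> \<open>0 \<le> \<nu> u\<close> by (simp add: power2_eq_square)
  qed
  then have sum_sq: "(\<Sum>u<n. (\<mu> u - \<nu> u)^2) \<le> 2"
    using sum_mono[of "{..<n}" "\<lambda>u. (\<mu> u - \<nu> u)^2" "\<lambda>u. \<mu> u + \<nu> u"] assms
    unfolding prob_vector_def by (simp add: sum.distrib)
  have "deg_norm_sq n E (\<lambda>u. \<mu> u - \<nu> u) \<le> 2 / a * (\<Sum>u<n. (\<mu> u - \<nu> u)^2)"
    unfolding deg_norm_sq_def using deg_lower by (intro sum_div_le_of_lower_bound[OF a_pos]) auto
  also have "\<dots> \<le> 2 / a * 2"
    using sum_sq a_pos by (intro mult_left_mono) auto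
  finally show ?thesis
    by simp
qed

lemma funpow_walk_step_prob_diff_sq_le:
  assumes "prob_vector n \<mu>" and "prob_vector n \<nu>" and "x < n"
  shows "((walk_step n E ^^ t) \<mu> x - (walk_step n E ^^ t) \<nu> x)^2 \<le> 6 * L^t"
proof -
  let ?f = "\<lambda>u. \<mu> u - \<nu> u"
  have "(\<Sum>u<n. ?f u) = 0"
    using assms(1,2) unfolding prob_vector_def by (simp add: sum_subtractf)
  then have "deg_norm_sq n E ((walk_step n E ^^ t) ?f) \<le> L^t * deg_norm_sq n E ?f"
    by (rule deg_norm_sq_funpow_le)
  also have "\<dots> \<le> L^t * (4 / a)"
    using deg_norm_sq_prob_diff_le[OF assms(1,2)] L_nonneg by (intro mult_left_mono) auto
  finally have "3 * a / 2 * deg_norm_sq n E ((walk_step n E ^^ t) ?f) \<le> 3 * a / 2 * (L^t * (4 / a))"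
    using a_pos by (intro mult_left_mono) auto
  also have "\<dots> = 6 * L^t"
    using a_pos by simp
  finally have "((walk_step n E ^^ t) ?f x)^2 \<le> 6 * L^t"
    using sq_le_deg_norm_sq[OF assms(3), of "(walk_step n E ^^ t) ?f"] by linarith
  then show ?thesis
    by (simp add: funpow_walk_step_diff)
qed

lemma abs_walk_dist_diff_le:
  assumes "w < n" and "w' < n" and "x < n"
  shows "\<bar>walk_dist n E t w x - walk_dist n E t w' x\<bar> \<le> sqrt 6 * sqrt L ^ t"
proof -
  have "(walk_dist n E t w x - walk_dist n E t w' x)^2 \<le> 6 * L^t"
    using funpow_walk_step_prob_diff_sq_le[OF prob_vector_walk_dist[OF assms(1), of 0]
        prob_vector_walk_dist[OF assms(2), of 0] assms(3), of t]
    by (simp only: walk_dist_eq_funpow[symmetric])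
  then have "sqrt ((walk_dist n E t w x - walk_dist n E t w' x)^2) \<le> sqrt (6 * L^t)"
    by (rule real_sqrt_le_mono)
  moreover have "sqrt (6 * L^t) = sqrt 6 * sqrt L ^ t"
    by (simp add: real_sqrt_mult real_sqrt_power)
  ultimately show ?thesis
    using real_sqrt_abs[of "walk_dist n E t w x - walk_dist n E t w' x"] by linarith
qed

lemma stat_dist_ge: "v < n \<Longrightarrow> 1 / (3 * n) \<le> stat_dist v"
proof -
  assume v: "v < n"
  have "(\<Sum>y<n. real (deg n E y)) \<le> n * (3 * a / 2)"
    using deg_upper sum_mono[of "{..<n}" "\<lambda>y. real (deg n E y)" "\<lambda>_. 3 * a / 2"] by simp
  moreover have "0 < (\<Sum>y<n. real (deg n E y))"
    using v deg_pos by (intro sum_pos) auto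
  ultimately have "(a / 2) / (n * (3 * a / 2)) \<le> real (deg n E v) / (\<Sum>y<n. real (deg n E y))"
    using deg_lower[OF v] a_pos by (intro frac_le) auto
  then show ?thesis
    unfolding stat_dist_def using a_pos by (simp add: field_simps)
qed

lemma walk_dist_ge:
  assumes "216 * (real n)^2 * L^t \<le> 1" and "y < n" and "v < n"
  shows "1 / (6 * n) \<le> walk_dist n E t y v"
proof -
  have "0 < n"
    using assms(3) by simp
  have "(walk_dist n E t y v - stat_dist v)^2 \<le> 6 * L^t"
    using funpow_walk_step_prob_diff_sq_le[OF prob_vector_walk_dist[OF assms(2), of 0]
        prob_vector_stat_dist[OF \<open>0 < n\<close>] assms(3), of t]
    by (simp only: walk_dist_eq_funpow[symmetric] funpow_walk_step_stat_dist)
  also have "\<dots> \<le> (1 / (6 * n))^2"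
    using assms(1,3) by (simp add: power2_eq_square field_simps)
  finally have "\<bar>walk_dist n E t y v - stat_dist v\<bar> \<le> 1 / (6 * n)"
    using abs_le_square_iff[of "walk_dist n E t y v - stat_dist v" "1 / (6 * n)"] by simp
  then show ?thesis
    using stat_dist_ge[OF assms(3)] by (simp add: field_simps)
qed

end

section \<open>Graphs in the class G_{k,n,p}\<close>

lemma in_class_deg_dev_sq_le:
  assumes cls: "in_class k n p C0 eta E" and "1 \<le> ln n"
    and big: "32 * C0^2 * ln n \<le> p * n" and "u < n"
  shows "(real (deg n E u) - p * n)^2 \<le> (p * n)^2 / 32"
proof -
  have "0 \<le> 32 * C0^2 * ln n"
    using \<open>1 \<le> ln n\<close> by simp
  then have "0 \<le> p * n"
    using big by linarith
  have "\<forall>v<n. \<bar>real (deg n E v) - p * n\<bar> \<le> C0 * sqrt (p * n * ln n)"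
    using cls unfolding in_class_def by (elim conjE)
  then have "\<bar>real (deg n E u) - p * n\<bar>^2 \<le> (C0 * sqrt (p * n * ln n))^2"
    using \<open>u < n\<close> by (intro power_mono) auto
  also have "\<dots> = p * n * (C0^2 * ln n)"
    using \<open>0 \<le> p * n\<close> \<open>1 \<le> ln n\<close> by (simp add: power_mult_distrib)
  also have "\<dots> \<le> p * n * (p * n / 32)"
    using big \<open>0 \<le> p * n\<close> by (intro mult_left_mono) auto
  finally show ?thesis
    by (simp add: power2_eq_square)
qed

lemma in_class_contracting_walk:
  assumes cls: "in_class k n p C0 eta E" and "0 < C0" and "1 \<le> ln n"
    and big: "32 * C0^2 * ln n \<le> p * n"
  shows "contracting_walk n E (p * n) (8 * C0^2 / (p * n))"
proof -
  define a where "a = p * n"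
  have "32 * C0^2 * 1 \<le> 32 * C0^2 * ln n"
    using \<open>1 \<le> ln n\<close> by (intro mult_left_mono) auto
  then have "32 * C0^2 \<le> a"
    using big unfolding a_def by linarith
  moreover have "0 < C0^2"
    using \<open>0 < C0\<close> by simp
  ultimately have "0 < a"
    by linarith
  have simple: "simple_graph n E"
    using cls unfolding in_class_def by (elim conjE)
  obtain lam phi where spectral: "spectral_decomp n E lam phi"
    and gap: "max \<bar>lam 1\<bar> \<bar>lam (n - 1)\<bar> \<le> C0 * sqrt a"
    using cls unfolding in_class_def a_def by (elim conjE exE)
  interpret graph_spectrum n E lam phi
    using simple spectral by unfold_locales
  have dev: "(real (deg n E u) - a)^2 \<le> a^2 / 32" if "u < n" for u
    unfolding a_def using in_class_deg_dev_sq_le[OF cls \<open>1 \<le> ln n\<close> big that] .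
  have deg_bounds: "a / 2 \<le> real (deg n E u) \<and> real (deg n E u) \<le> 3 * a / 2" if "u < n" for u
    using abs_le_of_sq_dev_le[OF \<open>0 < a\<close> dev[OF that]] by linarith
  have "(2 * C0)^2 * a \<le> a^2"
    using \<open>32 * C0^2 \<le> a\<close> \<open>0 < a\<close> by (simp add: power2_eq_square mult_right_mono)
  then have "2 * (C0 * sqrt a) \<le> a"
    using \<open>0 < a\<close> \<open>0 < C0\<close> mult_sqrt_le[of "2 * C0" a a] by simp
  have dev_sum: "(\<Sum>i<n. (real (deg n E i) - a)^2) \<le> n * (a^2 / 32)"
    using sum_mono[of "{..<n}" "\<lambda>i. (real (deg n E i) - a)^2" "\<lambda>_. a^2 / 32"] dev by simp
  note contraction = deg_norm_sq_walk_step_le[OF \<open>0 < a\<close> _ \<open>2 * (C0 * sqrt a) \<le> a\<close> dev_sum]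
  have "(C0 * sqrt a)^2 = C0^2 * a"
    using \<open>0 < a\<close> by (simp add: power_mult_distrib)
  then have rate: "8 * (C0 * sqrt a)^2 / a^2 = 8 * C0^2 / a"
    using \<open>0 < a\<close> by (simp only:) (simp add: field_simps power2_eq_square)
  show ?thesis
    unfolding a_def[symmetric]
  proof unfold_locales
    show "0 < deg n E u" if "u < n" for u
      using deg_bounds[OF that] \<open>0 < a\<close> by linarith
    show "deg_norm_sq n E (walk_step n E f) \<le> 8 * C0^2 / a * deg_norm_sq n E f"
      if "(\<Sum>u<n. f u) = 0" for f
      using contraction[of f] spectral_decomp_abs_le[OF spectral gap] deg_bounds that
      unfolding rate by (simp add: power_divide)
  qed (use simple deg_bounds \<open>0 < a\<close> in auto)
qed

lemma in_class_hit_time_dist_diff_le: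
  assumes cls: "in_class k n p C0 eta E" and "0 < C0" and "1 \<le> ln n"
    and big: "32 * C0^2 * ln n \<le> p * n" and "0 < l"
    and mixed: "216 * (real n)^2 * (8 * C0^2 / (p * n))^l \<le> 1"
    and "v < n" and "w < n" and "w' < n"
  shows "\<bar>hit_time_dist n E (walk_dist n E l w) v - hit_time_dist n E (walk_dist n E l w') v\<bar>
           \<le> 2 * sqrt 6 * (1 + 6 * real n * l) * sqrt (8 * C0^2 / (p * n)) ^ l"
proof -
  define L where "L = 8 * C0^2 / (p * n)"
  interpret contracting_walk n E "p * n" L
    unfolding L_def by (rule in_class_contracting_walk[OF cls \<open>0 < C0\<close> \<open>1 \<le> ln n\<close> big])
  have "32 * C0^2 * 1 \<le> 32 * C0^2 * ln n"
    using \<open>1 \<le> ln n\<close> by (intro mult_left_mono) auto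
  then have "L \<le> (1 / 2)^2"
    unfolding L_def using big a_pos by (simp add: pos_divide_le_eq power2_eq_square)
  then have "sqrt L \<le> 1 / 2"
    using real_sqrt_le_mono by fastforce
  have "0 \<le> sqrt L"
    using L_nonneg by simp
  have "sqrt L < 1"
    using \<open>sqrt L \<le> 1 / 2\<close> by linarith
  have "reachable_target n E v l (1 / (6 * n))"
    using walk_graph_axioms walk_dist_ge[OF mixed[folded L_def]] \<open>v < n\<close> \<open>0 < l\<close>
    by (auto simp: reachable_target_def reachable_target_axioms_def)
  then interpret reachable_target n E v l "1 / (6 * n)" .
  have same_mass: "(\<Sum>u<n. walk_dist n E l w u) = (\<Sum>u<n. walk_dist n E l w' u)"
    using prob_vector_walk_dist[OF \<open>w < n\<close>] prob_vector_walk_dist[OF \<open>w' < n\<close>]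
    unfolding prob_vector_def by simp
  have decay: "\<bar>(walk_step n E ^^ t) (walk_dist n E l w) u - (walk_step n E ^^ t) (walk_dist n E l w') u\<bar>
      \<le> (sqrt 6 * sqrt L ^ l) * sqrt L ^ t" if "u < n" for t u
    using abs_walk_dist_diff_le[OF \<open>w < n\<close> \<open>w' < n\<close> that, of "l + t"]
    by (simp only: walk_dist_add[of l t] power_add mult.assoc)
  have "\<bar>hit_time_dist n E (walk_dist n E l w) v - hit_time_dist n E (walk_dist n E l w') v\<bar>
      \<le> (1 + l / (1 / (6 * n))) * (sqrt 6 * sqrt L ^ l) / (1 - sqrt L)"
    by (rule hit_time_dist_diff_le[OF same_mass \<open>0 \<le> sqrt L\<close> \<open>sqrt L < 1\<close> decay])
  also have "\<dots> = (1 + 6 * real n * l) * (sqrt 6 * sqrt L ^ l) * (1 / (1 - sqrt L))"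
    by simp
  also have "\<dots> \<le> (1 + 6 * real n * l) * (sqrt 6 * sqrt L ^ l) * 2"
  proof (rule mult_left_mono)
    show "1 / (1 - sqrt L) \<le> 2"
      using \<open>sqrt L \<le> 1 / 2\<close> by (subst pos_divide_le_eq) (linarith, simp add: algebra_simps)
  qed (use \<open>0 \<le> sqrt L\<close> in simp)
  finally show ?thesis
    unfolding L_def by (simp add: mult_ac)
qed

lemma eventually_density_bounds:
  fixes p :: "nat \<Rightarrow> real"
  assumes "0 < k" and "0 \<le> c"
    and "eventually (\<lambda>n. ln n / real n powr ((real k - 1) / real k) \<le> p n
                        \<and> p n \<le> 1 - c * (ln n)^4 / n) sequentially"
  shows "eventually (\<lambda>n. ln n * real n powr (1 / real k) \<le> p n * n \<and> p n \<le> 1) sequentially"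
  using assms(3) eventually_ge_at_top[of 1]
proof eventually_elim
  case (elim n)
  have "0 < real n powr ((real k - 1) / real k)"
    using elim by simp
  then have "ln n \<le> p n * real n powr ((real k - 1) / real k)"
    using elim by (simp add: divide_le_eq)
  then have "ln n * real n powr (1 / real k)
      \<le> p n * real n powr ((real k - 1) / real k) * real n powr (1 / real k)"
    by (rule mult_right_mono) simp
  also have "\<dots> = p n * n"
    using \<open>0 < k\<close> elim by (simp add: mult.assoc powr_add[symmetric] add_divide_distrib[symmetric])
  finally have "ln n * real n powr (1 / real k) \<le> p n * n" .
  moreover have "0 \<le> c * (ln n)^4 / n"
    using \<open>0 \<le> c\<close> elim by simp
  ultimately show ?case
    using elim by linarith
qed

lemma in_class_hit_time_dist_diff_le_sqrt:
  fixes k l :: nat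
  assumes cls: "in_class k n p C0 eta E" and "0 < C0" and "0 < k" and "3 * k \<le> l"
    and "1 \<le> ln n" and "32 * C0^2 \<le> real n powr (1 / k)" and "216 * (8 * C0^2)^l \<le> n"
    and density: "ln n * real n powr (1 / k) \<le> p * n" and "p \<le> 1"
    and "v < n" and "w < n" and "w' < n"
  shows "\<bar>hit_time_dist n E (walk_dist n E l w) v - hit_time_dist n E (walk_dist n E l w') v\<bar>
           \<le> 14 * sqrt 6 * l * sqrt ((8 * C0^2)^l) * (sqrt (ln n) / sqrt (p * n))"
proof -
  define K where "K = (8 * C0^2)^l"
  define r where "r = real n powr (1 / k)"
  have "0 < l"
    using assms(3,4) by simp
  have "1 \<le> real n"
    using \<open>v < n\<close> by simp
  then have "1 \<le> r"
    unfolding r_def by (intro ge_one_powr_ge_zero) auto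
  have "1 * r \<le> ln n * r" and "32 * C0^2 * ln n \<le> r * ln n"
    using \<open>1 \<le> ln n\<close> \<open>1 \<le> r\<close> assms(6) unfolding r_def[symmetric] by (intro mult_right_mono; simp)+
  then have "r \<le> p * n" and big: "32 * C0^2 * ln n \<le> p * n"
    using density unfolding r_def[symmetric] by (simp_all add: mult.commute)
  then have "0 < p * n"
    using \<open>1 \<le> r\<close> by linarith
  have cube: "(8 * C0^2 / (p * n))^l \<le> K / (real n)^3"
    unfolding K_def using assms(3,4) \<open>1 \<le> real n\<close> \<open>r \<le> p * n\<close> unfolding r_def
    by (intro power_div_le_div_cube) auto
  then have "216 * (real n)^2 * (8 * C0^2 / (p * n))^l \<le> 216 * (real n)^2 * (K / (real n)^3)"
    by (intro mult_left_mono) auto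
  also have "\<dots> = 216 * K / n"
    using \<open>1 \<le> real n\<close> by (simp add: power2_eq_square power3_eq_cube)
  also have "\<dots> \<le> 1"
    using assms(7) \<open>1 \<le> real n\<close> unfolding K_def by simp
  finally have mixed: "216 * (real n)^2 * (8 * C0^2 / (p * n))^l \<le> 1" .
  have "\<bar>hit_time_dist n E (walk_dist n E l w) v - hit_time_dist n E (walk_dist n E l w') v\<bar>
      \<le> 2 * sqrt 6 * ((1 + 6 * real n * l) * sqrt (8 * C0^2 / (p * n)) ^ l)"
    using in_class_hit_time_dist_diff_le[OF cls \<open>0 < C0\<close> \<open>1 \<le> ln n\<close> big \<open>0 < l\<close> mixed
        \<open>v < n\<close> \<open>w < n\<close> \<open>w' < n\<close>] by (simp add: mult.assoc)
  also have "\<dots> \<le> 2 * sqrt 6 * (7 * l * sqrt K / sqrt n)"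
    using \<open>0 < p * n\<close> \<open>1 \<le> real n\<close> \<open>0 < l\<close> cube
    by (intro mult_left_mono linear_mult_sqrt_power_le) auto
  also have "\<dots> = 14 * sqrt 6 * l * sqrt K * (1 / sqrt n)"
    by simp
  also have "\<dots> \<le> 14 * sqrt 6 * l * sqrt K * (sqrt (ln n) / sqrt (p * n))"
  proof (intro mult_left_mono inverse_sqrt_le_sqrt_ln_div)
    show "p * n \<le> n"
      using \<open>p \<le> 1\<close> mult_right_mono[of p 1 "real n"] by simp
    show "0 \<le> 14 * sqrt 6 * l * sqrt K"
      unfolding K_def by simp
  qed (use \<open>0 < p * n\<close> \<open>1 \<le> ln n\<close> in auto)
  finally show ?thesis
    unfolding K_def .
qed

theorem lemma4p1:
  fixes k l :: nat and p :: "nat \<Rightarrow> real" and c C0 :: real and eta :: "nat \<Rightarrow> real"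
  assumes "k \<ge> 2" and "l \<ge> 3 * k + 2"
    and "c > 0"
    and "eventually (\<lambda>n. ln n / real n powr ((real k - 1) / real k) \<le> p n
                        \<and> p n \<le> 1 - c * (ln n)^4 / n) sequentially"
    and "C0 > 0"
    and "eta \<longlonglongrightarrow> 0"
  shows "\<exists>C N. \<forall>n \<ge> N. \<forall>E. in_class k n (p n) C0 (eta n) E \<longrightarrow>
           (\<forall>v<n. \<forall>w<n. \<forall>w'<n.
              \<bar>hit_time_dist n E (walk_dist n E l w) v - hit_time_dist n E (walk_dist n E l w') v\<bar>
                \<le> C * (sqrt (ln n) / sqrt (p n * n)))"
proof -
  have "0 < k" and "3 * k \<le> l"
    using assms(1,2) by simp_all
  have "eventually (\<lambda>n. 1 \<le> ln (real n) \<and> 32 * C0^2 \<le> real n powr (1 / real k)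
      \<and> 216 * (8 * C0^2)^l \<le> real n) sequentially"
    using \<open>0 < k\<close> by (intro eventually_conj; real_asymp)
  then have "eventually (\<lambda>n. (1 \<le> ln (real n) \<and> 32 * C0^2 \<le> real n powr (1 / real k)
      \<and> 216 * (8 * C0^2)^l \<le> real n) \<and> ln n * real n powr (1 / real k) \<le> p n * n \<and> p n \<le> 1)
      sequentially"
    using eventually_density_bounds[OF \<open>0 < k\<close> less_imp_le[OF assms(3)] assms(4)]
    by (rule eventually_conj)
  then obtain N where "\<And>n. N \<le> n \<Longrightarrow> (1 \<le> ln (real n) \<and> 32 * C0^2 \<le> real n powr (1 / real k)
      \<and> 216 * (8 * C0^2)^l \<le> real n) \<and> ln n * real n powr (1 / real k) \<le> p n * n \<and> p n \<le> 1"
    unfolding eventually_sequentially by blast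
  then show ?thesis
    using in_class_hit_time_dist_diff_le_sqrt[OF _ assms(5) \<open>0 < k\<close> \<open>3 * k \<le> l\<close>] by blast
qed

end
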